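(* Let $m\ge0$ and let $\alpha=(\alpha_0,\dots,\alpha_{2m+5})\in\mathbb{R}^{2m+6}$ satisfy \[ -\tfrac12\le\alpha_0\le0,\quad\alpha_1=-\alpha_0,\quad\alpha_2\le\alpha_3\le\dots\le\alpha_{2m+5}\le\alpha_2+1,\quad\sum_{r=2}^{2m+5}\alpha_r=m+1 . \] Let \[ E(\alpha)=-2\alpha_0+\sum_{r\ge2:\alpha_r\le\alpha_0}2\alpha_0+\sum_{r\ge2:\alpha_0<\alpha_r<-\alpha_0}(\alpha_0+\alpha_r)+\sum_{r\ge2:1+\alpha_0<\alpha_r<1-\alpha_0}(\alpha_r-1-\alpha_0)+\sum_{r\ge2:\alpha_r\ge1-\alpha_0}(-2\alpha_0), \] all sums being over $2\le r\le 2m+5$. Write $A=\#\{r\ge2:\alpha_r<-\alpha_0\}$ and $B=\#\{r\ge2:\alpha_r>1+\alpha_0\}$. Then $E(\alpha)=0$ if and only if one of the following holds: (1) $\alpha_0=0$ or $\alpha_0=-\frac12$; (2) $\alpha_2\le\alpha_0$ and $-\alpha_0\le\alpha_r\le1+\alpha_0$ for all $r\ge3$; (3) $\alpha_0<\alpha_r<1-\alpha_0$ for all $r\ge2$, $2\le A\le m+3$, $B\le m+1$, and \[ \sum_{r\ge2:-\alpha_0\le\alpha_r\le1+\alpha_0}\alpha_r=(m+1-B)+(A-2-B)\alpha_0 . \] Moreover, for each choice of $A$, $B$ and $\alpha_0$ (as in (3)) there exist values of $\alpha_r$ ($r\ge2$) solving this equation; if $A=m+3$ then $\alpha_r=1+\alpha_0$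 for all $r$ with $-\alpha_0\le\alpha_r\le1+\alpha_0$, and if $B=m+1$ then $\alpha_r=-\alpha_0$ for all $r$ with $-\alpha_0\le\alpha_r\le1+\alpha_0$. *)

theory Defs
  imports Complex_Main
begin

text \<open>The vector alpha in R^(2m+6) is represented by a function nat => real,
  of which only the values at indices 0..2m+5 matter.\<close>

definition idx :: "nat \<Rightarrow> nat set" where
  "idx m = {2..2*m+5}"

definition admissible :: "nat \<Rightarrow> (nat \<Rightarrow> real) \<Rightarrow> bool" where
  "admissible m \<alpha> \<longleftrightarrow>
     -(1/2) \<le> \<alpha> 0 \<and> \<alpha> 0 \<le> 0 \<and> \<alpha> 1 = - \<alpha> 0 \<and>
     (\<forall>r. 2 \<le> r \<and> r < 2*m+5 \<longrightarrow> \<alpha> r \<le> \<alpha> (r+1)) \<and>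
     \<alpha> (2*m+5) \<le> \<alpha> 2 + 1 \<and>
     (\<Sum>r\<in>idx m. \<alpha> r) = real m + 1"

definition E_val :: "nat \<Rightarrow> (nat \<Rightarrow> real) \<Rightarrow> real" where
  "E_val m \<alpha> =
     - 2 * \<alpha> 0
     + (\<Sum>r\<in>{r\<in>idx m. \<alpha> r \<le> \<alpha> 0}. 2 * \<alpha> 0)
     + (\<Sum>r\<in>{r\<in>idx m. \<alpha> 0 < \<alpha> r \<and> \<alpha> r < - \<alpha> 0}. \<alpha> 0 + \<alpha> r)
     + (\<Sum>r\<in>{r\<in>idx m. 1 + \<alpha> 0 < \<alpha> r \<and> \<alpha> r < 1 - \<alpha> 0}. \<alpha> r - 1 - \<alpha> 0)
     + (\<Sum>r\<in>{r\<in>idx m. 1 - \<alpha> 0 \<le> \<alpha> r}. - 2 * \<alpha> 0)"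

definition cntA :: "nat \<Rightarrow> (nat \<Rightarrow> real) \<Rightarrow> nat" where
  "cntA m \<alpha> = card {r\<in>idx m. \<alpha> r < - \<alpha> 0}"

definition cntB :: "nat \<Rightarrow> (nat \<Rightarrow> real) \<Rightarrow> nat" where
  "cntB m \<alpha> = card {r\<in>idx m. 1 + \<alpha> 0 < \<alpha> r}"

definition mid :: "nat \<Rightarrow> (nat \<Rightarrow> real) \<Rightarrow> nat set" where
  "mid m \<alpha> = {r\<in>idx m. - \<alpha> 0 \<le> \<alpha> r \<and> \<alpha> r \<le> 1 + \<alpha> 0}"

definition cond1 :: "nat \<Rightarrow> (nat \<Rightarrow> real) \<Rightarrow> bool" where
  "cond1 m \<alpha> \<longleftrightarrow> \<alpha> 0 = 0 \<or> \<alpha> 0 = -(1/2)"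

definition cond2 :: "nat \<Rightarrow> (nat \<Rightarrow> real) \<Rightarrow> bool" where
  "cond2 m \<alpha> \<longleftrightarrow> \<alpha> 2 \<le> \<alpha> 0 \<and>
     (\<forall>r. 3 \<le> r \<and> r \<le> 2*m+5 \<longrightarrow> - \<alpha> 0 \<le> \<alpha> r \<and> \<alpha> r \<le> 1 + \<alpha> 0)"

definition cond3 :: "nat \<Rightarrow> (nat \<Rightarrow> real) \<Rightarrow> bool" where
  "cond3 m \<alpha> \<longleftrightarrow>
     (\<forall>r\<in>idx m. \<alpha> 0 < \<alpha> r \<and> \<alpha> r < 1 - \<alpha> 0) \<and>
     2 \<le> cntA m \<alpha> \<and> cntA m \<alpha> \<le> m + 3 \<and> cntB m \<alpha> \<le> m + 1 \<and>
     (\<Sum>r\<in>mid m \<alpha>. \<alpha> r) =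
       (real m + 1 - real (cntB m \<alpha>)) + (real (cntA m \<alpha>) - 2 - real (cntB m \<alpha>)) * \<alpha> 0"

end

theory Submission
  imports Defs
begin

text \<open>Write \<open>a = \<alpha> 0\<close>. Each \<open>\<alpha> r\<close> contributes a piecewise linear amount
  \<open>contrib a (\<alpha> r)\<close> to \<open>E\<close>, and admissibility confines all \<open>\<alpha> r\<close> to the window
  \<open>[\<alpha> 2, \<alpha> 2 + 1]\<close>. If some \<open>\<alpha> r \<ge> 1 - a\<close>, all contributions are nonnegative and
  \<open>E \<ge> -2a > 0\<close>. If some \<open>\<alpha> r \<le> a\<close>, then \<open>\<alpha> 2\<close> contributes \<open>2a\<close>, cancelling the
  constant \<open>-2a\<close>, and all other contributions are nonpositive, so \<open>E = 0\<close> forces them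
  to vanish. Otherwise the constraint \<open>\<Sum> \<alpha> r = m + 1\<close> eliminates the coordinates outside
  the middle band, and \<open>E\<close> is the target value \<open>(m + 1 - B) + (A - 2 - B) a\<close> minus the
  sum over the band. The band holds \<open>2m + 4 - A - B\<close> coordinates, each in \<open>[-a, 1 + a]\<close>;
  the target exceeds the least possible band sum by \<open>(m + 1 - B)(1 + 2a)\<close> and falls short
  of the largest by \<open>(m + 3 - A)(1 + 2a)\<close>. This gives the bounds on \<open>A\<close> and \<open>B\<close>, the
  solvability of the band equation and the two extremal cases.\<close>

lemma finite_idx [simp]: "finite (idx m)"
  by (simp add: idx_def)

lemma card_idx: "card (idx m) = 2*m + 4"
  by (simp add: idx_def)

lemma two_in_idx [simp]: "2 \<in> idx m"
  by (simp add: idx_def)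

lemma admissible_mono:
  assumes "admissible m \<alpha>" "2 \<le> r" "r \<le> s" "s \<le> 2*m + 5"
  shows "\<alpha> r \<le> \<alpha> s"
  by (rule lift_Suc_mono_le_ivl[where N = "{2..<2*m+5}"])
     (use assms in \<open>auto simp: admissible_def\<close>)

lemma admissible_window:
  assumes "admissible m \<alpha>" "r \<in> idx m"
  shows "\<alpha> 2 \<le> \<alpha> r" "\<alpha> r \<le> \<alpha> 2 + 1"
proof -
  have r: "2 \<le> r" "r \<le> 2*m + 5" using assms(2) by (auto simp: idx_def)
  show "\<alpha> 2 \<le> \<alpha> r" using admissible_mono[OF assms(1)] r by simp
  have "\<alpha> r \<le> \<alpha> (2*m + 5)" using admissible_mono[OF assms(1)] r by simp
  then show "\<alpha> r \<le> \<alpha> 2 + 1" using assms(1) by (simp add: admissible_def)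
qed

definition contrib :: "real \<Rightarrow> real \<Rightarrow> real" where
  "contrib a x =
     (if x \<le> a then 2*a else 0) + (if a < x \<and> x < -a then a + x else 0)
   + (if 1 + a < x \<and> x < 1 - a then x - 1 - a else 0) + (if 1 - a \<le> x then -2*a else 0)"

lemma E_val_eq_sum_contrib: "E_val m \<alpha> = -2 * \<alpha> 0 + (\<Sum>r\<in>idx m. contrib (\<alpha> 0) (\<alpha> r))"
  unfolding E_val_def contrib_def sum.inter_filter[OF finite_idx]
  by (simp only: sum.distrib add.assoc)

lemma contrib_zero [simp]: "contrib 0 x = 0"
  by (simp add: contrib_def)

lemma contrib_minus_half:
  assumes "-(1/2) \<le> x" "x \<le> 3/2"
  shows "contrib (-(1/2)) x = x - 1/2"
  using assms by (auto simp: contrib_def)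

lemma contrib_below:
  assumes "a < 0" "x \<le> a"
  shows "contrib a x = 2*a"
  using assms by (simp add: contrib_def)

lemma contrib_nonneg:
  assumes "a \<le> 0" "-a \<le> x"
  shows "0 \<le> contrib a x"
  using assms by (simp add: contrib_def)

lemma contrib_nonpos:
  assumes "a \<le> 0" "x \<le> 1 + a"
  shows "contrib a x \<le> 0"
  using assms by (simp add: contrib_def)

lemma contrib_eq_0_iff:
  assumes "a < 0" "x \<le> 1 + a"
  shows "contrib a x = 0 \<longleftrightarrow> -a \<le> x"
  using assms by (auto simp: contrib_def)

lemma contrib_inner:
  assumes "a < x" "x < 1 - a"
  shows "contrib a x = (if x < -a then a + x else 0) + (if 1 + a < x then x - 1 - a else 0)"
  using assms by (simp add: contrib_def)

lemma sum_idx_split: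
  fixes f :: "nat \<Rightarrow> 'b::comm_monoid_add"
  assumes "admissible m \<alpha>"
  shows "sum f (idx m) = sum f {r\<in>idx m. \<alpha> r < - \<alpha> 0} + sum f (mid m \<alpha>)
           + sum f {r\<in>idx m. 1 + \<alpha> 0 < \<alpha> r}"
proof -
  have "-(1/2) \<le> \<alpha> 0" using assms by (simp add: admissible_def)
  then have "sum f (idx m) = (\<Sum>r\<in>idx m. (if \<alpha> r < - \<alpha> 0 then f r else 0)
      + (if - \<alpha> 0 \<le> \<alpha> r \<and> \<alpha> r \<le> 1 + \<alpha> 0 then f r else 0)
      + (if 1 + \<alpha> 0 < \<alpha> r then f r else 0))"
    by (intro sum.cong) auto
  then show ?thesis
    unfolding mid_def sum.inter_filter[OF finite_idx] by (simp only: sum.distrib add.assoc)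
qed

lemma card_mid:
  assumes "admissible m \<alpha>"
  shows "card (mid m \<alpha>) + cntA m \<alpha> + cntB m \<alpha> = 2*m + 4"
  using sum_idx_split[OF assms, of "\<lambda>_. 1::nat"] by (simp add: card_idx cntA_def cntB_def)

lemma sum_mid_bounds:
  "real (card (mid m \<alpha>)) * (- \<alpha> 0) \<le> (\<Sum>r\<in>mid m \<alpha>. \<alpha> r)"
  "(\<Sum>r\<in>mid m \<alpha>. \<alpha> r) \<le> real (card (mid m \<alpha>)) * (1 + \<alpha> 0)"
  by (rule sum_bounded_below sum_bounded_above; auto simp: mid_def)+

lemma E_val_pos_if_above:
  assumes "admissible m \<alpha>" "\<alpha> 0 < 0" "r \<in> idx m" "1 - \<alpha> 0 \<le> \<alpha> r"
  shows "0 < E_val m \<alpha>"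
proof -
  have "- \<alpha> 0 \<le> \<alpha> 2" using admissible_window[OF assms(1,3)] assms(4) by linarith
  then have "- \<alpha> 0 \<le> \<alpha> s" if "s \<in> idx m" for s
    using admissible_window(1)[OF assms(1) that] by linarith
  then have "0 \<le> (\<Sum>r\<in>idx m. contrib (\<alpha> 0) (\<alpha> r))"
    using assms(2) by (intro sum_nonneg contrib_nonneg) auto
  then show ?thesis using assms(2) by (simp add: E_val_eq_sum_contrib)
qed

lemma E_val_eq_0_iff_cond2:
  assumes "admissible m \<alpha>" "\<alpha> 0 < 0" "\<alpha> 2 \<le> \<alpha> 0"
  shows "E_val m \<alpha> = 0 \<longleftrightarrow> cond2 m \<alpha>"
proof -
  let ?c = "\<lambda>r. contrib (\<alpha> 0) (\<alpha> r)"
  have rest: "idx m - {2} = {3..2*m+5}" by (auto simp: idx_def)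
  have upper: "\<alpha> s \<le> 1 + \<alpha> 0" if "s \<in> idx m" for s
    using admissible_window(2)[OF assms(1) that] assms(3) by linarith
  have "E_val m \<alpha> = - 2 * \<alpha> 0 + ?c 2 + (\<Sum>r\<in>idx m - {2}. ?c r)"
    by (simp add: E_val_eq_sum_contrib sum.remove[OF finite_idx two_in_idx])
  also have "\<dots> = - (\<Sum>r\<in>{3..2*m+5}. - ?c r)"
    using assms(2,3) by (simp add: contrib_below rest sum_negf)
  finally have "E_val m \<alpha> = 0 \<longleftrightarrow> (\<forall>s\<in>{3..2*m+5}. ?c s = 0)"
    using sum_nonneg_eq_0_iff[of "{3..2*m+5}" "\<lambda>r. - ?c r"] upper assms(2)
    by (auto simp: idx_def contrib_nonpos)
  also have "\<dots> \<longleftrightarrow> (\<forall>s\<in>{3..2*m+5}. - \<alpha> 0 \<le> \<alpha> s)"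
    using upper assms(2) by (auto simp: idx_def contrib_eq_0_iff)
  also have "\<dots> \<longleftrightarrow> cond2 m \<alpha>"
    using upper assms(3) by (auto simp: cond2_def idx_def)
  finally show ?thesis .
qed

definition mid_target :: "nat \<Rightarrow> nat \<Rightarrow> nat \<Rightarrow> real \<Rightarrow> real" where
  "mid_target m A B a = (real m + 1 - real B) + (real A - 2 - real B) * a"

lemma cond3_iff:
  "cond3 m \<alpha> \<longleftrightarrow>
     (\<forall>r\<in>idx m. \<alpha> 0 < \<alpha> r \<and> \<alpha> r < 1 - \<alpha> 0) \<and>
     2 \<le> cntA m \<alpha> \<and> cntA m \<alpha> \<le> m + 3 \<and> cntB m \<alpha> \<le> m + 1 \<and>
     (\<Sum>r\<in>mid m \<alpha>. \<alpha> r) = mid_target m (cntA m \<alpha>) (cntB m \<alpha>) (\<alpha> 0)"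
  by (simp add: cond3_def mid_target_def)

lemma mid_target_minus_lower:
  assumes "k + A + B = 2*m + 4"
  shows "mid_target m A B a - real k * (-a) = (real m + 1 - real B) * (1 + 2*a)"
proof -
  have k: "real k = 2 * real m + 4 - real A - real B" using arg_cong[OF assms, of real] by simp
  show ?thesis unfolding k mid_target_def by (simp add: algebra_simps)
qed

lemma upper_minus_mid_target:
  assumes "k + A + B = 2*m + 4"
  shows "real k * (1 + a) - mid_target m A B a = (real m + 3 - real A) * (1 + 2*a)"
proof -
  have k: "real k = 2 * real m + 4 - real A - real B" using arg_cong[OF assms, of real] by simp
  show ?thesis unfolding k mid_target_def by (simp add: algebra_simps)
qed

lemma E_val_eq_mid_target_minus_sum:
  assumes adm: "admissible m \<alpha>" and inner: "\<forall>r\<in>idx m. \<alpha> 0 < \<alpha> r \<and> \<alpha> r < 1 - \<alpha> 0"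
  shows "E_val m \<alpha> = mid_target m (cntA m \<alpha>) (cntB m \<alpha>) (\<alpha> 0) - (\<Sum>r\<in>mid m \<alpha>. \<alpha> r)"
proof -
  let ?L = "{r\<in>idx m. \<alpha> r < - \<alpha> 0}" and ?U = "{r\<in>idx m. 1 + \<alpha> 0 < \<alpha> r}"
  have "(\<Sum>r\<in>idx m. contrib (\<alpha> 0) (\<alpha> r))
      = (\<Sum>r\<in>idx m. (if \<alpha> r < - \<alpha> 0 then \<alpha> 0 + \<alpha> r else 0)
          + (if 1 + \<alpha> 0 < \<alpha> r then \<alpha> r - 1 - \<alpha> 0 else 0))"
    using inner by (intro sum.cong) (auto simp: contrib_inner)
  also have "\<dots> = (\<Sum>r\<in>?L. \<alpha> 0 + \<alpha> r) + (\<Sum>r\<in>?U. \<alpha> r - 1 - \<alpha> 0)"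
    unfolding sum.inter_filter[OF finite_idx] by (simp only: sum.distrib)
  also have "\<dots> = real (cntA m \<alpha>) * \<alpha> 0 + (\<Sum>r\<in>?L. \<alpha> r) + (\<Sum>r\<in>?U. \<alpha> r)
      - real (cntB m \<alpha>) * (1 + \<alpha> 0)"
    by (simp add: cntA_def cntB_def sum.distrib sum_subtractf algebra_simps)
  finally show ?thesis
    using sum_idx_split[OF adm, of \<alpha>] adm
    by (simp add: E_val_eq_sum_contrib mid_target_def admissible_def algebra_simps)
qed

lemma E_val_eq_0_if_cond3:
  assumes "admissible m \<alpha>" "cond3 m \<alpha>"
  shows "E_val m \<alpha> = 0"
  using assms E_val_eq_mid_target_minus_sum by (simp add: cond3_iff)

text \<open>Each coordinate below \<open>-\<alpha> 0\<close> contributes more than \<open>2 * \<alpha> 0\<close> and all others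
  contribute nonnegatively, so one such coordinate alone cannot cancel \<open>-2 * \<alpha> 0\<close>.\<close>

lemma two_le_cntA_if_E_val_eq_0:
  assumes adm: "admissible m \<alpha>" and neg: "\<alpha> 0 < 0"
    and inner: "\<forall>r\<in>idx m. \<alpha> 0 < \<alpha> r \<and> \<alpha> r < 1 - \<alpha> 0" and E: "E_val m \<alpha> = 0"
  shows "2 \<le> cntA m \<alpha>"
proof (rule ccontr)
  let ?L = "{r\<in>idx m. \<alpha> r < - \<alpha> 0}"
  assume "\<not> 2 \<le> cntA m \<alpha>"
  then have "card ?L = 1 \<or> card ?L = 0" unfolding cntA_def by linarith
  have "-(1/2) \<le> \<alpha> 0" using adm by (simp add: admissible_def)
  from \<open>card ?L = 1 \<or> card ?L = 0\<close> have "2 * \<alpha> 0 < (\<Sum>r\<in>?L. contrib (\<alpha> 0) (\<alpha> r))"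
  proof
    assume "card ?L = 1"
    then obtain x where L: "?L = {x}" by (rule card_1_singletonE)
    then have "x \<in> idx m" "\<alpha> x < - \<alpha> 0" by auto
    then show ?thesis
      using L inner \<open>-(1/2) \<le> \<alpha> 0\<close> by (simp add: contrib_inner)
  next
    assume "card ?L = 0"
    then have "?L = {}" by (simp add: card_0_eq)
    then show ?thesis using neg by (simp only: sum.empty)
  qed
  moreover have "(\<Sum>r\<in>idx m. contrib (\<alpha> 0) (\<alpha> r))
      = (\<Sum>r\<in>?L. contrib (\<alpha> 0) (\<alpha> r)) + (\<Sum>r\<in>idx m - ?L. contrib (\<alpha> 0) (\<alpha> r))"
    by (simp add: sum.subset_diff[of ?L "idx m"] add.commute)
  moreover have "0 \<le> (\<Sum>r\<in>idx m - ?L. contrib (\<alpha> 0) (\<alpha> r))"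
    using neg by (intro sum_nonneg contrib_nonneg) auto
  ultimately show False using E by (simp add: E_val_eq_sum_contrib)
qed

lemma cond3_if_E_val_eq_0:
  assumes adm: "admissible m \<alpha>" and a: "-(1/2) < \<alpha> 0" "\<alpha> 0 < 0"
    and inner: "\<forall>r\<in>idx m. \<alpha> 0 < \<alpha> r \<and> \<alpha> r < 1 - \<alpha> 0" and E: "E_val m \<alpha> = 0"
  shows "cond3 m \<alpha>"
proof -
  let ?t = "mid_target m (cntA m \<alpha>) (cntB m \<alpha>) (\<alpha> 0)"
  have eq: "(\<Sum>r\<in>mid m \<alpha>. \<alpha> r) = ?t"
    using E E_val_eq_mid_target_minus_sum[OF adm inner] by simp
  have pos: "0 < 1 + 2 * \<alpha> 0" using a by simp
  have "0 \<le> (real m + 3 - real (cntA m \<alpha>)) * (1 + 2 * \<alpha> 0)"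
    using upper_minus_mid_target[OF card_mid[OF adm], of "\<alpha> 0"]
      sum_mid_bounds(2)[where m = m and \<alpha> = \<alpha>] eq by linarith
  then have "cntA m \<alpha> \<le> m + 3" using pos by (simp add: zero_le_mult_iff)
  moreover have "0 \<le> (real m + 1 - real (cntB m \<alpha>)) * (1 + 2 * \<alpha> 0)"
    using mid_target_minus_lower[OF card_mid[OF adm], of "\<alpha> 0"]
      sum_mid_bounds(1)[where m = m and \<alpha> = \<alpha>] eq by linarith
  then have "cntB m \<alpha> \<le> m + 1" using pos by (simp add: zero_le_mult_iff)
  ultimately show ?thesis
    using two_le_cntA_if_E_val_eq_0[OF adm a(2) inner E] inner eq by (simp add: cond3_iff)
qed

lemma E_val_eq_0_if_minus_half:
  assumes adm: "admissible m \<alpha>" and a: "\<alpha> 0 = -(1/2)"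
  shows "E_val m \<alpha> = 0"
proof -
  have S: "(\<Sum>r\<in>idx m. \<alpha> r) = real m + 1" using adm by (simp add: admissible_def)
  have rest: "card (idx m - {2}) = 2*m + 3" by (simp add: card_idx)
  have "- (1/2) \<le> \<alpha> 2"
  proof (rule ccontr)
    assume low: "\<not> - (1/2) \<le> \<alpha> 2"
    have "(\<Sum>r\<in>idx m - {2}. \<alpha> r) \<le> real (card (idx m - {2})) * (1/2)"
      using admissible_window(2)[OF adm] low by (intro sum_bounded_above) force
    moreover have "(\<Sum>r\<in>idx m. \<alpha> r) = \<alpha> 2 + (\<Sum>r\<in>idx m - {2}. \<alpha> r)"
      by (simp add: sum.remove)
    ultimately show False using S low rest by simp
  qed
  moreover have "\<alpha> 2 \<le> 1/2"
  proof (rule ccontr)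
    assume high: "\<not> \<alpha> 2 \<le> 1/2"
    have "real (card (idx m)) * (1/2) \<le> (\<Sum>r\<in>idx m. \<alpha> r)"
      using admissible_window(1)[OF adm] high by (intro sum_bounded_below) force
    then show False using S by (simp add: card_idx)
  qed
  ultimately have "contrib (\<alpha> 0) (\<alpha> r) = \<alpha> r - 1/2" if "r \<in> idx m" for r
    using admissible_window[OF adm that] contrib_minus_half[of "\<alpha> r"] a by auto
  then have "(\<Sum>r\<in>idx m. contrib (\<alpha> 0) (\<alpha> r)) = real m + 1 - real (2*m + 4) / 2"
    using S by (simp add: sum_subtractf card_idx)
  then show ?thesis by (simp add: E_val_eq_sum_contrib a field_simps)
qed

lemma E_val_eq_0_iff:
  assumes adm: "admissible m \<alpha>"
  shows "E_val m \<alpha> = 0 \<longleftrightarrow> cond1 m \<alpha> \<or> cond2 m \<alpha> \<or> cond3 m \<alpha>"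
proof (cases "cond1 m \<alpha>")
  case True
  then show ?thesis
    using E_val_eq_0_if_minus_half[OF adm] by (auto simp: cond1_def E_val_eq_sum_contrib)
next
  case False
  then have a: "-(1/2) < \<alpha> 0" "\<alpha> 0 < 0" using adm by (auto simp: cond1_def admissible_def)
  consider (above) r where "r \<in> idx m" "1 - \<alpha> 0 \<le> \<alpha> r"
    | (below) r where "r \<in> idx m" "\<alpha> r \<le> \<alpha> 0"
    | (inner) "\<forall>r\<in>idx m. \<alpha> 0 < \<alpha> r \<and> \<alpha> r < 1 - \<alpha> 0" by force
  then show ?thesis
  proof cases
    case above
    moreover have "\<not> cond2 m \<alpha>" "\<not> cond3 m \<alpha>"
      using above admissible_window[OF adm] a by (fastforce simp: cond2_def cond3_def)+
    ultimately show ?thesis using E_val_pos_if_above[OF adm a(2)] False by fastforce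
  next
    case below
    then have "\<alpha> 2 \<le> \<alpha> 0" using admissible_window(1)[OF adm] by fastforce
    moreover have "\<not> cond3 m \<alpha>" using below by (fastforce simp: cond3_def)
    ultimately show ?thesis using E_val_eq_0_iff_cond2[OF adm a(2)] False by blast
  next
    case inner
    have "\<not> cond2 m \<alpha>" using inner[rule_format, OF two_in_idx] unfolding cond2_def by linarith
    then show ?thesis
      using False inner cond3_if_E_val_eq_0[OF adm a] E_val_eq_0_if_cond3[OF adm] by blast
  qed
qed

lemma exists_bounded_with_sum:
  fixes S lo hi :: real
  assumes "real k * lo \<le> S" "S \<le> real k * hi"
  shows "\<exists>x :: nat \<Rightarrow> real. (\<forall>i<k. lo \<le> x i \<and> x i \<le> hi) \<and> (\<Sum>i<k. x i) = S"
proof (cases "k = 0")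
  case True
  then show ?thesis using assms by auto
next
  case False
  then have "lo \<le> S / real k" "S / real k \<le> hi"
    using assms by (simp_all add: field_simps)
  then show ?thesis using False by (intro exI[of _ "\<lambda>_. S / real k"]) simp
qed

lemma mid_equation_solvable:
  assumes "-(1/2) < a" "2 \<le> A" "A \<le> m + 3" "B \<le> m + 1"
  shows "\<exists>x :: nat \<Rightarrow> real. (\<forall>i < 2*m+4 - A - B. - a \<le> x i \<and> x i \<le> 1 + a) \<and>
           (\<Sum>i<2*m+4 - A - B. x i) = mid_target m A B a"
proof (rule exists_bounded_with_sum)
  have k: "(2*m + 4 - A - B) + A + B = 2*m + 4" using assms by simp
  have "0 \<le> (real m + 1 - real B) * (1 + 2*a)" "0 \<le> (real m + 3 - real A) * (1 + 2*a)"
    using assms by (intro mult_nonneg_nonneg; simp)+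
  then show "real (2*m+4 - A - B) * (- a) \<le> mid_target m A B a"
    and "mid_target m A B a \<le> real (2*m+4 - A - B) * (1 + a)"
    using mid_target_minus_lower[OF k, of a] upper_minus_mid_target[OF k, of a] by linarith+
qed

lemma sum_eq_card_mult_bound_imp_eq:
  fixes f :: "'a \<Rightarrow> real"
  assumes "finite S" "\<And>x. x \<in> S \<Longrightarrow> f x \<le> c" "sum f S = real (card S) * c"
  shows "\<forall>x\<in>S. f x = c"
proof -
  have "(\<Sum>x\<in>S. c - f x) = 0" using assms by (simp add: sum_subtractf)
  then show ?thesis using sum_nonneg_eq_0_iff[of S "\<lambda>x. c - f x"] assms by auto
qed

lemma mid_eq_upper_if_cntA_max:
  assumes adm: "admissible m \<alpha>" and "cond3 m \<alpha>" "cntA m \<alpha> = m + 3"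
  shows "\<forall>r\<in>mid m \<alpha>. \<alpha> r = 1 + \<alpha> 0"
proof (rule sum_eq_card_mult_bound_imp_eq)
  show "(\<Sum>r\<in>mid m \<alpha>. \<alpha> r) = real (card (mid m \<alpha>)) * (1 + \<alpha> 0)"
    using upper_minus_mid_target[OF card_mid[OF adm], of "\<alpha> 0"] assms by (simp add: cond3_iff)
qed (auto simp: mid_def)

lemma mid_eq_lower_if_cntB_max:
  assumes adm: "admissible m \<alpha>" and "cond3 m \<alpha>" "cntB m \<alpha> = m + 1"
  shows "\<forall>r\<in>mid m \<alpha>. \<alpha> r = - \<alpha> 0"
proof -
  have "(\<Sum>r\<in>mid m \<alpha>. - \<alpha> r) = real (card (mid m \<alpha>)) * \<alpha> 0"
    using mid_target_minus_lower[OF card_mid[OF adm], of "\<alpha> 0"] assms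
    by (simp add: cond3_iff sum_negf)
  then have "\<forall>r\<in>mid m \<alpha>. - \<alpha> r = \<alpha> 0"
    by (intro sum_eq_card_mult_bound_imp_eq) (auto simp: mid_def)
  then show ?thesis by auto
qed

theorem lemma3p4:
  fixes m :: nat
  shows
    "(\<forall>\<alpha>. admissible m \<alpha> \<longrightarrow>
        (E_val m \<alpha> = 0 \<longleftrightarrow> cond1 m \<alpha> \<or> cond2 m \<alpha> \<or> cond3 m \<alpha>))
   \<and> (\<forall>a0 A B. -(1/2) < a0 \<and> a0 < 0 \<and> 2 \<le> A \<and> A \<le> m + 3 \<and> B \<le> m + 1 \<longrightarrow>
        (\<exists>x :: nat \<Rightarrow> real.
           (\<forall>i < 2*m+4 - A - B. - a0 \<le> x i \<and> x i \<le> 1 + a0) \<and>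
           (\<Sum>i<2*m+4 - A - B. x i) = (real m + 1 - real B) + (real A - 2 - real B) * a0))
   \<and> (\<forall>\<alpha>. admissible m \<alpha> \<and> cond3 m \<alpha> \<and> cntA m \<alpha> = m + 3 \<longrightarrow>
        (\<forall>r\<in>mid m \<alpha>. \<alpha> r = 1 + \<alpha> 0))
   \<and> (\<forall>\<alpha>. admissible m \<alpha> \<and> cond3 m \<alpha> \<and> cntB m \<alpha> = m + 1 \<longrightarrow>
        (\<forall>r\<in>mid m \<alpha>. \<alpha> r = - \<alpha> 0))"
  using E_val_eq_0_iff mid_equation_solvable[unfolded mid_target_def]
    mid_eq_upper_if_cntA_max mid_eq_lower_if_cntB_max
  by blast

end
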